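(* Let $\mathcal X$ be a set, $B>0$, $T\ge 1$, and $\gamma\in(B/T,B)$. Let $\mathcal F$ be a set of functions $\mathcal X\to\mathbb R$ with $\sup_{f\in\mathcal F}\|f\|_\infty\le B$ such that $(\mathcal F,\|\cdot\|_\infty)$ is totally bounded. Let $(x_t)_{t\ge1}$ be any sequence in $\mathcal X$ and $(y_t)_{t\ge 1}$ any real sequence with $\max_{1\le t\le T}|y_t|\le B$. Then the Chaining Exponentially Weighted Average forecaster (described in the context), tuned with $\eta^{(0)}=1/(50B^2)$ and $\eta^{(k)}=\sqrt{2\log(N_k)/T}\,2^k/(30B\gamma)$ for $k=1,\ldots,K$, satisfies $$\sum_{t=1}^T(y_t-\hat y_t)^2-\inf_{f\in\mathcal F}\sum_{t=1}^T(y_t-f(x_t))^2\le B^2\big(5+50\log\mathcal N_\infty(\mathcal F,\gamma)\big)+120B\sqrt T\int_0^{\gamma/2}\sqrt{\log\mathcal N_\infty(\mathcal F,\epsilon)}\,d\epsilon.$$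
   Context: Online protocol: at each round $t$, $x_t$ is revealed, the forecaster outputs $\hat y_t\in\mathbb R$, then $y_t$ is revealed. $\|f\|_\infty=\sup_{x\in\mathcal X}|f(x)|$. A proper $\epsilon$-net of $\mathcal F$ is a subset $\mathcal G\subseteq\mathcal F$ such that every $f\in\mathcal F$ has some $g\in\mathcal G$ with $\|f-g\|_\infty\le\epsilon$; $\mathcal N_\infty(\mathcal F,\epsilon)$ is the smallest cardinality of a proper $\epsilon$-net; totally bounded means this is finite for all $\epsilon>0$. Construction: set $K=\lceil\log_2(\gamma T/B)\rceil$. For each $k\ge 0$, let $\mathcal F^{(k)}$ be a proper $\gamma/2^k$-net of $\mathcal F$ of cardinality $\mathcal N_\infty(\mathcal F,\gamma/2^k)$, and for $f\in\mathcal F$ let $\pi_k(f)\in\arg\min_{h\in\mathcal F^{(k)}}\|f-h\|_\infty$. Write $\mathcal F^{(0)}=\{f^{(0)}_1,\ldots,f^{(0)}_{N_0}\}$ and, for $k\ge1$, $\mathcal G^{(k)}=\{\pi_k(f)-\pi_{k-1}(f):f\in\mathcal F\}=\{g^{(k)}_1,\ldots,g^{(k)}_{N_k}\}$. Algorithm: initialize $\hat{\boldsymbol w}_1$ uniform on $\{1,\ldots,N_0\}$ and $\hat{\boldsymbol u}^{(j,k)}_1$ uniform on $\{1,\ldots,N_k\}$ for all $j\le N_0$, $k\le K$. At round $t$: define $\hat f_{t,j}=f^{(0)}_j+\sum_{k=1}^K\sum_{i=1}^{N_k}\hat u^{(j,k)}_{t,i}g^{(k)}_i$; predict $\hat y_t=\sum_{j=1}^{N_0}\hat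 w_{t,j}\hat f_{t,j}(x_t)$; after observing $y_t$, update $$\hat u^{(j,k)}_{t+1,i}\propto\exp\Big(-\eta^{(k)}\sum_{s=1}^t-2\big(y_s-\hat f_{s,j}(x_s)\big)g^{(k)}_i(x_s)\Big),\qquad \hat w_{t+1,j}\propto\exp\Big(-\eta^{(0)}\sum_{s=1}^t\big(y_s-\hat f_{s,j}(x_s)\big)^2\Big),$$ normalized to sum to one over $i\in\{1,\ldots,N_k\}$ and over $j\in\{1,\ldots,N_0\}$ respectively. *)

theory Defs
  imports "HOL-Analysis.Analysis"
begin

text \<open>Sup norm of a real-valued function on a set (the type 'a plays the role of X).\<close>
definition sup_norm :: "('a \<Rightarrow> real) \<Rightarrow> real" where
  "sup_norm f = (SUP z. \<bar>f z\<bar>)"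

definition proper_net :: "('a \<Rightarrow> real) set \<Rightarrow> real \<Rightarrow> ('a \<Rightarrow> real) set \<Rightarrow> bool" where
  "proper_net F \<epsilon> G \<longleftrightarrow> G \<subseteq> F \<and> (\<forall>f\<in>F. \<exists>g\<in>G. sup_norm (\<lambda>z. f z - g z) \<le> \<epsilon>)"

definition covering_number :: "('a \<Rightarrow> real) set \<Rightarrow> real \<Rightarrow> nat" where
  "covering_number F \<epsilon> = (LEAST n. \<exists>G. finite G \<and> card G = n \<and> proper_net F \<epsilon> G)"

definition totally_bounded_sup :: "('a \<Rightarrow> real) set \<Rightarrow> bool" where
  "totally_bounded_sup F \<longleftrightarrow> (\<forall>\<epsilon>>0. \<exists>G. finite G \<and> proper_net F \<epsilon> G)"

definition ewa_weight :: "real \<Rightarrow> (nat \<Rightarrow> real) \<Rightarrow> nat \<Rightarrow> nat \<Rightarrow> real" where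
  "ewa_weight \<eta> L n i = exp (- \<eta> * L i) / (\<Sum>i'<n. exp (- \<eta> * L i'))"

text \<open>hat f_{t,j}, given the cumulative exponents C j k i = sum_{s<t} -2 (y_s - hat f_{s,j}(x_s)) g^(k)_i(x_s).\<close>
definition chain_fhat ::
  "nat \<Rightarrow> (nat \<Rightarrow> nat) \<Rightarrow> (nat \<Rightarrow> real) \<Rightarrow> (nat \<Rightarrow> nat \<Rightarrow> 'a \<Rightarrow> real) \<Rightarrow> (nat \<Rightarrow> 'a \<Rightarrow> real)
   \<Rightarrow> (nat \<Rightarrow> nat \<Rightarrow> nat \<Rightarrow> real) \<Rightarrow> nat \<Rightarrow> 'a \<Rightarrow> real" where
  "chain_fhat K N \<eta> g f0 C j z =
     f0 j z + (\<Sum>k=1..K. \<Sum>i<N k. ewa_weight (\<eta> k) (C j k) (N k) i * g k i z)"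

primrec chain_cum ::
  "nat \<Rightarrow> (nat \<Rightarrow> nat) \<Rightarrow> (nat \<Rightarrow> real) \<Rightarrow> (nat \<Rightarrow> nat \<Rightarrow> 'a \<Rightarrow> real) \<Rightarrow> (nat \<Rightarrow> 'a \<Rightarrow> real)
   \<Rightarrow> (nat \<Rightarrow> 'a) \<Rightarrow> (nat \<Rightarrow> real) \<Rightarrow> nat \<Rightarrow> (nat \<Rightarrow> nat \<Rightarrow> nat \<Rightarrow> real)" where
  "chain_cum K N \<eta> g f0 x y 0 = (\<lambda>j k i. 0)"
| "chain_cum K N \<eta> g f0 x y (Suc n) = (\<lambda>j k i. chain_cum K N \<eta> g f0 x y n j k i
      + (- 2) * (y (Suc n) - chain_fhat K N \<eta> g f0 (chain_cum K N \<eta> g f0 x y n) j (x (Suc n)))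
          * g k i (x (Suc n)))"

primrec chain_loss ::
  "nat \<Rightarrow> (nat \<Rightarrow> nat) \<Rightarrow> (nat \<Rightarrow> real) \<Rightarrow> (nat \<Rightarrow> nat \<Rightarrow> 'a \<Rightarrow> real) \<Rightarrow> (nat \<Rightarrow> 'a \<Rightarrow> real)
   \<Rightarrow> (nat \<Rightarrow> 'a) \<Rightarrow> (nat \<Rightarrow> real) \<Rightarrow> nat \<Rightarrow> nat \<Rightarrow> real" where
  "chain_loss K N \<eta> g f0 x y 0 = (\<lambda>j. 0)"
| "chain_loss K N \<eta> g f0 x y (Suc n) = (\<lambda>j. chain_loss K N \<eta> g f0 x y n j
      + (y (Suc n) - chain_fhat K N \<eta> g f0 (chain_cum K N \<eta> g f0 x y n) j (x (Suc n)))\<^sup>2)"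

text \<open>Prediction hat y_t at round t >= 1.\<close>
definition chain_pred ::
  "real \<Rightarrow> nat \<Rightarrow> nat \<Rightarrow> (nat \<Rightarrow> nat) \<Rightarrow> (nat \<Rightarrow> real) \<Rightarrow> (nat \<Rightarrow> nat \<Rightarrow> 'a \<Rightarrow> real) \<Rightarrow> (nat \<Rightarrow> 'a \<Rightarrow> real)
   \<Rightarrow> (nat \<Rightarrow> 'a) \<Rightarrow> (nat \<Rightarrow> real) \<Rightarrow> nat \<Rightarrow> real" where
  "chain_pred \<eta>0 K N0 N \<eta> g f0 x y t =
     (\<Sum>j<N0. ewa_weight \<eta>0 (chain_loss K N \<eta> g f0 x y (t - 1)) N0 j
             * chain_fhat K N \<eta> g f0 (chain_cum K N \<eta> g f0 x y (t - 1)) j (x t))"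

end

(*
  Each first-level expert j starts from a centre f0 j of the coarsest net and adds, at every
  scale k, an exponentially weighted average of the increments between consecutive nets.  These
  averages are run on the linearised square loss, so by Hoeffding's lemma scale k costs a regret
  of order B (gamma / 2^k) sqrt (T ln N_k) against any fixed chain of increments, where
  N_k <= N(F, gamma / 2^k)^2.  The chain of proj_K f reaches within gamma / 2^K <= B / T of f,
  and the resulting dyadic entropy sum is dominated by the entropy integral because covering
  numbers are antitone.  All experts stay within 5B of the observations, so the first-level
  average with eta0 = 1 / (50 B^2) pays only 50 B^2 ln N(F, gamma) by exp-concavity of the
  square loss.
*)

theory Submission
  imports Defs "HOL-Probability.Hoeffding"
begin

section \<open>Exponentially weighted averages\<close>

lemma ewa_weight_nonneg: "0 \<le> ewa_weight \<eta> L n i"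
  unfolding ewa_weight_def by (auto intro!: divide_nonneg_nonneg sum_nonneg)

lemma sum_ewa_weight:
  assumes "0 < n"
  shows "(\<Sum>i<n. ewa_weight \<eta> L n i) = 1"
proof -
  have "(\<Sum>i<n. exp (- \<eta> * L i)) > 0" using assms by (intro sum_pos) auto
  then show ?thesis unfolding ewa_weight_def by (simp flip: sum_divide_distrib)
qed

lemma abs_convex_combination_le:
  fixes u a :: "nat \<Rightarrow> real"
  assumes "\<And>i. i \<in> S \<Longrightarrow> 0 \<le> u i" "(\<Sum>i\<in>S. u i) = 1" "\<And>i. i \<in> S \<Longrightarrow> \<bar>a i\<bar> \<le> c"
  shows "\<bar>\<Sum>i\<in>S. u i * a i\<bar> \<le> c"
proof -
  have "\<bar>\<Sum>i\<in>S. u i * a i\<bar> \<le> (\<Sum>i\<in>S. u i * c)"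
    using assms by (intro order.trans[OF sum_abs] sum_mono) (simp add: abs_mult mult_left_mono)
  also have "\<dots> = c" by (simp add: assms(2) flip: sum_distrib_right)
  finally show ?thesis .
qed

lemma sum_exp_add_ewa_weight:
  assumes "0 < n"
  shows "(\<Sum>i<n. exp (- \<eta> * (A i + b i)))
       = (\<Sum>i<n. exp (- \<eta> * A i)) * (\<Sum>i<n. ewa_weight \<eta> A n i * exp (- \<eta> * b i))"
proof -
  have "(\<Sum>i<n. exp (- \<eta> * A i)) > 0" using assms by (intro sum_pos) auto
  then show ?thesis
    by (simp add: ewa_weight_def sum_distrib_left algebra_simps flip: exp_add)
qed

text \<open>The potential \<open>W m = (\<Sum>i<n. exp (- \<eta> * Lc m i))\<close> shrinks by at least
  \<open>exp (- \<eta> * r t)\<close> in round \<open>t\<close>, and it always dominates the term of expert \<open>i0\<close>.\<close>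
lemma ewa_potential_bound:
  fixes l Lc :: "nat \<Rightarrow> nat \<Rightarrow> real" and r :: "nat \<Rightarrow> real"
  assumes n: "0 < n" and \<eta>: "0 < \<eta>" and Lc: "\<And>m i. Lc m i = (\<Sum>s=1..m. l s i)"
    and mix: "\<And>t. t \<in> {1..T} \<Longrightarrow>
      (\<Sum>i<n. ewa_weight \<eta> (Lc (t - 1)) n i * exp (- \<eta> * l t i)) \<le> exp (- \<eta> * r t)"
    and i0: "i0 < n"
  shows "(\<Sum>t=1..T. r t) \<le> Lc T i0 + ln n / \<eta>"
proof -
  define W where "W m = (\<Sum>i<n. exp (- \<eta> * Lc m i))" for m
  have W_le: "W m \<le> n * exp (- \<eta> * (\<Sum>t=1..m. r t))" if "m \<le> T" for m
    using that
  proof (induction m)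
    case 0
    then show ?case by (simp add: W_def Lc)
  next
    case (Suc m)
    have "Lc (Suc m) i = Lc m i + l (Suc m) i" for i by (simp add: Lc)
    then have "W (Suc m) = W m * (\<Sum>i<n. ewa_weight \<eta> (Lc m) n i * exp (- \<eta> * l (Suc m) i))"
      unfolding W_def by (simp only: sum_exp_add_ewa_weight[OF n])
    also have "\<dots> \<le> W m * exp (- \<eta> * r (Suc m))"
      using mix[of "Suc m"] Suc.prems by (intro mult_left_mono) (auto simp: W_def sum_nonneg)
    also have "\<dots> \<le> n * exp (- \<eta> * (\<Sum>t=1..m. r t)) * exp (- \<eta> * r (Suc m))"
      using Suc by (intro mult_right_mono) auto
    also have "\<dots> = n * exp (- \<eta> * (\<Sum>t=1..Suc m. r t))"
      by (simp add: algebra_simps flip: exp_add)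
    finally show ?case .
  qed
  have "exp (- \<eta> * Lc T i0) \<le> W T"
    unfolding W_def using i0 by (intro member_le_sum) auto
  also have "\<dots> \<le> n * exp (- \<eta> * (\<Sum>t=1..T. r t))" by (rule W_le) simp
  finally have "ln (exp (- \<eta> * Lc T i0)) \<le> ln (n * exp (- \<eta> * (\<Sum>t=1..T. r t)))"
    using n by (subst ln_le_cancel_iff) auto
  then have "\<eta> * (\<Sum>t=1..T. r t) \<le> \<eta> * (Lc T i0 + ln n / \<eta>)"
    using n \<eta> by (simp add: ln_mult algebra_simps)
  then show ?thesis using \<eta> by simp
qed

lemma exp_le_chord:
  fixes a L s :: real
  assumes "\<bar>a\<bar> \<le> L" and "0 < L"
  shows "exp (s * a) \<le> (L - a) / (2 * L) * exp (- s * L) + (a + L) / (2 * L) * exp (s * L)"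
proof -
  define w where "w = (L - a) / (2 * L)"
  have w: "0 \<le> w" "w \<le> 1" using assms by (auto simp: w_def field_simps)
  have "exp ((1 - w) *\<^sub>R (s * L) + w *\<^sub>R (- s * L)) \<le> (1 - w) * exp (s * L) + w * exp (- s * L)"
    using w by (intro convex_onD[OF exp_convex]) auto
  also have "(1 - w) *\<^sub>R (s * L) + w *\<^sub>R (- s * L) = s * a"
    using assms by (simp add: w_def field_simps)
  also have "1 - w = (a + L) / (2 * L)"
    using assms by (simp add: w_def field_simps)
  finally show ?thesis by (simp add: w_def algebra_simps)
qed

lemma hoeffding_lemma_finite:
  fixes u a :: "nat \<Rightarrow> real"
  assumes S: "finite S" and u: "\<And>i. i \<in> S \<Longrightarrow> 0 \<le> u i" "(\<Sum>i\<in>S. u i) = 1"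
    and a: "\<And>i. i \<in> S \<Longrightarrow> \<bar>a i\<bar> \<le> L" and L: "0 < L" and s: "0 < s"
  shows "(\<Sum>i\<in>S. u i * exp (s * a i)) \<le> exp (s * (\<Sum>i\<in>S. u i * a i) + s\<^sup>2 * L\<^sup>2 / 2)"
proof -
  define m where "m = (\<Sum>i\<in>S. u i * a i)"
  define p where "p = (m + L) / (2 * L)"
  define h where "h = 2 * s * L"
  have "(\<Sum>i\<in>S. u i * exp (s * a i))
      \<le> (\<Sum>i\<in>S. u i * ((L - a i) / (2 * L) * exp (- s * L) + (a i + L) / (2 * L) * exp (s * L)))"
    using u a L by (intro sum_mono mult_left_mono exp_le_chord) auto
  also have "\<dots> = (\<Sum>i\<in>S. u i * ((exp (- s * L) + exp (s * L)) / 2)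
                        + u i * a i * ((exp (s * L) - exp (- s * L)) / (2 * L)))"
    using L by (intro sum.cong refl) (simp add: field_simps)
  also have "\<dots> = (exp (- s * L) + exp (s * L)) / 2 + m * ((exp (s * L) - exp (- s * L)) / (2 * L))"
    using u(2) by (simp add: m_def sum.distrib flip: sum_distrib_right sum_divide_distrib)
  also have "\<dots> = (L - m) / (2 * L) * exp (- s * L) + (m + L) / (2 * L) * exp (s * L)"
    using L by (simp add: field_simps)
  also have "\<dots> = exp (- s * L) * (1 + p * (exp h - 1))"
    using L by (simp add: p_def h_def field_simps exp_minus power2_eq_square flip: exp_add)
  also have "\<dots> \<le> exp (- s * L) * exp (h * p + h\<^sup>2 / 8)"
  proof -
    have "\<bar>m\<bar> \<le> L" unfolding m_def using u a by (rule abs_convex_combination_le)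
    then have p: "0 \<le> p" and h: "0 \<le> h" using L s by (auto simp: p_def h_def)
    then have "0 < 1 + p * (exp h - 1)" by (smt (verit) one_le_exp_iff mult_nonneg_nonneg)
    then have "1 + p * (exp h - 1) = exp (ln (1 + p * (exp h - 1)))" by simp
    also have "\<dots> \<le> exp (h * p + h\<^sup>2 / 8)"
      using Hoeffdings_lemma_aux[OF h p] by simp
    finally show ?thesis by simp
  qed
  also have "\<dots> = exp (s * m + s\<^sup>2 * L\<^sup>2 / 2)"
    using L by (simp add: p_def h_def field_simps power2_eq_square flip: exp_add)
  finally show ?thesis by (simp add: m_def)
qed

lemma ewa_linear_regret:
  fixes l C :: "nat \<Rightarrow> nat \<Rightarrow> real"
  assumes n: "0 < n" and \<eta>: "0 < \<eta>" and L: "0 < L"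
    and l: "\<And>t i. t \<in> {1..T} \<Longrightarrow> i < n \<Longrightarrow> \<bar>l t i\<bar> \<le> L"
    and C: "\<And>m i. C m i = (\<Sum>s=1..m. l s i)" and i0: "i0 < n"
  shows "(\<Sum>t=1..T. \<Sum>i<n. ewa_weight \<eta> (C (t - 1)) n i * l t i) - C T i0
           \<le> ln n / \<eta> + T * \<eta> * L\<^sup>2 / 2"
proof -
  have "(\<Sum>t=1..T. (\<Sum>i<n. ewa_weight \<eta> (C (t - 1)) n i * l t i) - \<eta> * L\<^sup>2 / 2) \<le> C T i0 + ln n / \<eta>"
  proof (rule ewa_potential_bound[OF n \<eta> C _ i0])
    fix t assume t: "t \<in> {1..T}"
    have "(\<Sum>i<n. ewa_weight \<eta> (C (t - 1)) n i * exp (\<eta> * - l t i))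
        \<le> exp (\<eta> * (\<Sum>i<n. ewa_weight \<eta> (C (t - 1)) n i * - l t i) + \<eta>\<^sup>2 * L\<^sup>2 / 2)"
      using l t by (intro hoeffding_lemma_finite ewa_weight_nonneg sum_ewa_weight n L \<eta>) auto
    then show "(\<Sum>i<n. ewa_weight \<eta> (C (t - 1)) n i * exp (- \<eta> * l t i))
        \<le> exp (- \<eta> * ((\<Sum>i<n. ewa_weight \<eta> (C (t - 1)) n i * l t i) - \<eta> * L\<^sup>2 / 2))"
      by (simp add: sum_negf algebra_simps power2_eq_square)
  qed
  then show ?thesis by (simp add: sum_subtractf)
qed

lemma ewa_linear_regret_tuned:
  fixes l C :: "nat \<Rightarrow> nat \<Rightarrow> real"
  assumes n: "0 < n" and L: "0 < L" and T: "0 < T"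
    and \<eta>: "\<eta> = sqrt (2 * ln n / T) / L"
    and l: "\<And>t i. t \<in> {1..T} \<Longrightarrow> i < n \<Longrightarrow> \<bar>l t i\<bar> \<le> L"
    and C: "\<And>m i. C m i = (\<Sum>s=1..m. l s i)" and i0: "i0 < n"
  shows "(\<Sum>t=1..T. \<Sum>i<n. ewa_weight \<eta> (C (t - 1)) n i * l t i) - C T i0 \<le> L * sqrt (2 * real T * ln n)"
proof (cases "n = 1")
  case True
  then show ?thesis using i0 sum_ewa_weight[of 1] by (simp add: C)
next
  case False
  define r where "r = sqrt (2 * ln n / T)"
  have "0 < ln n" using n False by simp
  then have r: "0 < r" "r\<^sup>2 = 2 * ln n / T" using T by (simp_all add: r_def)
  have "(\<Sum>t=1..T. \<Sum>i<n. ewa_weight \<eta> (C (t - 1)) n i * l t i) - C T i0 \<le> ln n / \<eta> + T * \<eta> * L\<^sup>2 / 2"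
    using r L by (intro ewa_linear_regret[OF n _ L l C i0]) (auto simp: \<eta> r_def[symmetric])
  also have "\<dots> = L * (T * r)"
    using r L T by (simp add: \<eta> r_def[symmetric] field_simps power2_eq_square)
  also have "T * r = sqrt ((T * r)\<^sup>2)"
    using r by simp
  also have "(T * r)\<^sup>2 = 2 * real T * ln n"
    using r T by (simp add: field_simps power2_eq_square)
  finally show ?thesis .
qed

lemma exp_square_loss_concave:
  fixes \<eta> D y :: real
  assumes \<eta>: "0 < \<eta>" and D: "2 * \<eta> * D\<^sup>2 \<le> 1"
  shows "concave_on {y - D..y + D} (\<lambda>q. exp (- \<eta> * (y - q)\<^sup>2))"
  unfolding concave_on_def
proof (rule f''_ge0_imp_convex)
  fix q assume q: "q \<in> {y - D..y + D}"
  show "((\<lambda>q. - exp (- \<eta> * (y - q)\<^sup>2)) has_real_derivative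
         - exp (- \<eta> * (y - q)\<^sup>2) * (2 * \<eta> * (y - q))) (at q)"
    by (rule derivative_eq_intros refl | simp add: algebra_simps)+
  show "((\<lambda>q. - exp (- \<eta> * (y - q)\<^sup>2) * (2 * \<eta> * (y - q))) has_real_derivative
         exp (- \<eta> * (y - q)\<^sup>2) * (2 * \<eta> - 4 * \<eta>\<^sup>2 * (y - q)\<^sup>2)) (at q)"
    by (rule derivative_eq_intros refl | simp add: algebra_simps power2_eq_square)+
  have "(y - q)\<^sup>2 \<le> D\<^sup>2" using q by (intro power2_le_iff_abs_le[THEN iffD2]) auto
  then have "2 * \<eta> * (y - q)\<^sup>2 \<le> 1"
    using \<eta> D by (smt (verit) mult_left_mono)
  then have "2 * \<eta> * (2 * \<eta> * (y - q)\<^sup>2) \<le> 2 * \<eta> * 1"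
    using \<eta> by (intro mult_left_mono) auto
  then have "4 * \<eta>\<^sup>2 * (y - q)\<^sup>2 \<le> 2 * \<eta>"
    by (simp add: power2_eq_square algebra_simps)
  then show "0 \<le> exp (- \<eta> * (y - q)\<^sup>2) * (2 * \<eta> - 4 * \<eta>\<^sup>2 * (y - q)\<^sup>2)"
    by simp
qed simp

text \<open>By exp-concavity (Jensen), the factor of the mixture prediction dominates the mixture of
  the experts' factors, so no \<open>T\<close>-dependent term appears.\<close>
lemma ewa_square_loss_regret:
  fixes p Lc :: "nat \<Rightarrow> nat \<Rightarrow> real" and y :: "nat \<Rightarrow> real"
  assumes n: "0 < n" and \<eta>: "0 < \<eta>" and D: "2 * \<eta> * D\<^sup>2 \<le> 1"
    and p: "\<And>t j. t \<in> {1..T} \<Longrightarrow> j < n \<Longrightarrow> \<bar>y t - p t j\<bar> \<le> D"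
    and Lc: "\<And>m j. Lc m j = (\<Sum>s=1..m. (y s - p s j)\<^sup>2)" and j0: "j0 < n"
  shows "(\<Sum>t=1..T. (y t - (\<Sum>j<n. ewa_weight \<eta> (Lc (t - 1)) n j * p t j))\<^sup>2) \<le> Lc T j0 + ln n / \<eta>"
proof (rule ewa_potential_bound[OF n \<eta> Lc _ j0])
  fix t assume t: "t \<in> {1..T}"
  have "(\<Sum>j<n. ewa_weight \<eta> (Lc (t - 1)) n j * exp (- \<eta> * (y t - p t j)\<^sup>2))
      \<le> exp (- \<eta> * (y t - (\<Sum>j<n. ewa_weight \<eta> (Lc (t - 1)) n j *\<^sub>R p t j))\<^sup>2)"
  proof (rule concave_on_sum[OF _ _ exp_square_loss_concave[OF \<eta> D]])
    show "{..<n} \<noteq> {}" using n by auto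
    show "(\<Sum>j<n. ewa_weight \<eta> (Lc (t - 1)) n j) = 1" by (rule sum_ewa_weight[OF n])
    fix j assume "j \<in> {..<n}"
    then have "\<bar>y t - p t j\<bar> \<le> D" using p[OF t] by simp
    then show "p t j \<in> {y t - D..y t + D}" by (auto simp: abs_le_iff)
  qed (simp_all add: ewa_weight_nonneg)
  then show "(\<Sum>j<n. ewa_weight \<eta> (Lc (t - 1)) n j * exp (- \<eta> * (y t - p t j)\<^sup>2))
      \<le> exp (- \<eta> * (y t - (\<Sum>j<n. ewa_weight \<eta> (Lc (t - 1)) n j * p t j))\<^sup>2)"
    by simp
qed

section \<open>Covering numbers and the entropy integral\<close>

lemma covering_number_attained:
  assumes "totally_bounded_sup F" "0 < \<epsilon>"
  shows "\<exists>G. finite G \<and> card G = covering_number F \<epsilon> \<and> proper_net F \<epsilon> G"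
proof -
  obtain G where "finite G" "proper_net F \<epsilon> G"
    using assms unfolding totally_bounded_sup_def by blast
  then have "\<exists>n G. finite G \<and> card G = n \<and> proper_net F \<epsilon> G" by blast
  then show ?thesis unfolding covering_number_def by (rule LeastI_ex)
qed

lemma covering_number_antimono:
  assumes "totally_bounded_sup F" "0 < \<epsilon>" "\<epsilon> \<le> \<epsilon>'"
  shows "covering_number F \<epsilon>' \<le> covering_number F \<epsilon>"
proof -
  obtain G where G: "finite G" "card G = covering_number F \<epsilon>" "proper_net F \<epsilon> G"
    using covering_number_attained[OF assms(1,2)] by blast
  then have "proper_net F \<epsilon>' G" using assms(3) unfolding proper_net_def by force
  then have "covering_number F \<epsilon>' \<le> card G"
    unfolding covering_number_def using G(1) by (intro Least_le) blast
  then show ?thesis using G(2) by simp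
qed

lemma abs_le_sup_norm:
  assumes "\<And>z. \<bar>h z\<bar> \<le> M"
  shows "\<bar>h z\<bar> \<le> sup_norm h"
  unfolding sup_norm_def using assms by (intro cSUP_upper bdd_aboveI[of _ M]) auto

lemma nearest_net_point_dist:
  assumes net: "proper_net F \<epsilon> G" and bdd: "\<forall>f\<in>F. \<forall>z. \<bar>f z\<bar> \<le> B"
    and f: "f \<in> F" and p: "p \<in> G"
    and nearest: "\<forall>h\<in>G. sup_norm (\<lambda>z. f z - p z) \<le> sup_norm (\<lambda>z. f z - h z)"
  shows "\<bar>f z - p z\<bar> \<le> \<epsilon>"
proof -
  obtain h where h: "h \<in> G" "sup_norm (\<lambda>z. f z - h z) \<le> \<epsilon>"
    using net f unfolding proper_net_def by blast
  have "p \<in> F" using net p unfolding proper_net_def by blast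
  have "\<bar>f z' - p z'\<bar> \<le> 2 * B" for z'
  proof -
    have "\<bar>f z'\<bar> \<le> B" "\<bar>p z'\<bar> \<le> B" using bdd f \<open>p \<in> F\<close> by auto
    then show ?thesis using abs_triangle_ineq4[of "f z'" "p z'"] by linarith
  qed
  then have "\<bar>f z - p z\<bar> \<le> sup_norm (\<lambda>z. f z - p z)"
    by (rule abs_le_sup_norm)
  also have "\<dots> \<le> \<epsilon>" using nearest h by force
  finally show ?thesis .
qed

lemma finite_card_image_pairs_le:
  assumes "finite A" "finite B" "\<And>f. f \<in> F \<Longrightarrow> a f \<in> A \<and> b f \<in> B"
  shows "finite ((\<lambda>f. \<phi> (a f) (b f)) ` F) \<and> card ((\<lambda>f. \<phi> (a f) (b f)) ` F) \<le> card A * card B"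
proof -
  have sub: "(\<lambda>f. \<phi> (a f) (b f)) ` F \<subseteq> (\<lambda>(u, v). \<phi> u v) ` (A \<times> B)"
    using assms(3) by force
  have "card ((\<lambda>f. \<phi> (a f) (b f)) ` F) \<le> card ((\<lambda>(u, v). \<phi> u v) ` (A \<times> B))"
    using assms(1,2) by (intro card_mono[OF _ sub]) auto
  also have "\<dots> \<le> card A * card B"
    using card_image_le[of "A \<times> B"] assms(1,2) by (simp add: card_cartesian_product)
  finally show ?thesis using assms(1,2) finite_subset[OF sub] by auto
qed

lemma disjoint_dyadic_intervals:
  fixes \<gamma> :: real
  assumes "0 < \<gamma>"
  shows "disjoint_family (\<lambda>k::nat. {\<gamma> / 2 ^ (k + 1)<..\<gamma> / 2 ^ k})"
proof -
  have "{\<gamma> / 2 ^ (k + 1)<..\<gamma> / 2 ^ k} \<inter> {\<gamma> / 2 ^ (k' + 1)<..\<gamma> / 2 ^ k'} = {}" if "k < k'" for k k' :: nat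
  proof -
    have "(2::real) ^ (k + 1) \<le> 2 ^ k'" using that by (intro power_increasing) auto
    then have "\<gamma> / 2 ^ k' \<le> \<gamma> / 2 ^ (k + 1)" using assms by (intro divide_left_mono) auto
    then show ?thesis by auto
  qed
  then show ?thesis unfolding disjoint_family_on_def by (metis Int_commute linorder_neqE_nat)
qed

lemma sum_indicator_disjoint_le:
  fixes c :: "'i \<Rightarrow> real" and \<phi> :: "'a \<Rightarrow> real"
  assumes "disjoint_family_on A S" "finite S"
    and "\<And>k z. k \<in> S \<Longrightarrow> z \<in> A k \<Longrightarrow> c k \<le> \<phi> z"
  shows "(\<Sum>k\<in>S. ennreal (c k) * indicator (A k) z) \<le> ennreal (\<phi> z) * indicator (\<Union>k\<in>S. A k) z"
proof (cases "\<exists>k\<in>S. z \<in> A k")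
  case True
  then obtain k0 where k0: "k0 \<in> S" "z \<in> A k0" by blast
  have "z \<notin> A k" if "k \<in> S - {k0}" for k
    using assms(1) k0 that unfolding disjoint_family_on_def by blast
  then have "(\<Sum>k\<in>S - {k0}. ennreal (c k) * indicator (A k) z) = 0"
    by (intro sum.neutral) auto
  moreover have "(\<Sum>k\<in>S. ennreal (c k) * indicator (A k) z)
      = ennreal (c k0) * indicator (A k0) z + (\<Sum>k\<in>S - {k0}. ennreal (c k) * indicator (A k) z)"
    by (intro sum.remove assms(2) k0(1))
  ultimately have "(\<Sum>k\<in>S. ennreal (c k) * indicator (A k) z) = ennreal (c k0)"
    using k0(2) by simp
  also have "\<dots> \<le> ennreal (\<phi> z) * indicator (\<Union>k\<in>S. A k) z"
    using k0 assms(3)[OF k0] by (auto simp: indicator_def intro: ennreal_leI)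
  finally show ?thesis .
qed simp

lemma sum_dyadic_le_nn_integral:
  fixes c :: "nat \<Rightarrow> real" and \<phi> :: "real \<Rightarrow> real"
  assumes \<gamma>: "0 < \<gamma>" and c: "\<And>k. 0 \<le> c k"
    and c_le: "\<And>k \<epsilon>. k \<in> {1..K} \<Longrightarrow> \<epsilon> \<in> {\<gamma> / 2 ^ (k + 1)<..\<gamma> / 2 ^ k} \<Longrightarrow> c k \<le> \<phi> \<epsilon>"
  shows "ennreal (\<Sum>k=1..K. \<gamma> / 2 ^ (k + 1) * c k) \<le> (\<integral>\<^sup>+ \<epsilon>\<in>{0..\<gamma>/2}. ennreal (\<phi> \<epsilon>) \<partial>lborel)"
proof -
  define I where "I k = {\<gamma> / 2 ^ (k + 1)<..\<gamma> / 2 ^ k}" for k :: nat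
  have "ennreal (\<gamma> / 2 ^ (k + 1) * c k) = ennreal (c k) * emeasure lborel (I k)" for k
  proof -
    have "\<gamma> / 2 ^ k - \<gamma> / 2 ^ (k + 1) = \<gamma> / 2 ^ (k + 1)" by (simp add: field_simps)
    moreover have "\<gamma> / 2 ^ (k + 1) \<le> \<gamma> / 2 ^ k" using \<gamma> by (simp add: field_simps)
    ultimately show ?thesis
      using \<gamma> c[of k] by (simp add: I_def mult.commute flip: ennreal_mult)
  qed
  then have "ennreal (\<Sum>k=1..K. \<gamma> / 2 ^ (k + 1) * c k) = (\<Sum>k=1..K. ennreal (c k) * emeasure lborel (I k))"
    using \<gamma> c by (simp flip: sum_ennreal)
  also have "\<dots> = (\<Sum>k=1..K. \<integral>\<^sup>+ \<epsilon>. ennreal (c k) * indicator (I k) \<epsilon> \<partial>lborel)"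
    by (intro sum.cong refl nn_integral_cmult_indicator[symmetric]) (auto simp: I_def)
  also have "\<dots> = (\<integral>\<^sup>+ \<epsilon>. (\<Sum>k=1..K. ennreal (c k) * indicator (I k) \<epsilon>) \<partial>lborel)"
    by (intro nn_integral_sum[symmetric]) (auto simp: I_def)
  also have "\<dots> \<le> (\<integral>\<^sup>+ \<epsilon>. ennreal (\<phi> \<epsilon>) * indicator (\<Union>k\<in>{1..K}. I k) \<epsilon> \<partial>lborel)"
  proof (intro nn_integral_mono sum_indicator_disjoint_le)
    show "disjoint_family_on I {1..K}"
      using disjoint_dyadic_intervals[OF \<gamma>] unfolding I_def disjoint_family_on_def by blast
  qed (auto simp: I_def c_le)
  also have "\<dots> \<le> (\<integral>\<^sup>+ \<epsilon>\<in>{0..\<gamma>/2}. ennreal (\<phi> \<epsilon>) \<partial>lborel)"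
  proof (intro nn_integral_mono mult_left_mono)
    have "I k \<subseteq> {0..\<gamma>/2}" if "k \<in> {1..K}" for k
    proof -
      have "(2::real) ^ 1 \<le> 2 ^ k" using that by (intro power_increasing) auto
      then have "\<gamma> / 2 ^ k \<le> \<gamma> / 2" using \<gamma> by (intro divide_left_mono) auto
      moreover have "0 < \<gamma> / 2 ^ (k + 1)" using \<gamma> by simp
      ultimately show ?thesis
        unfolding I_def by (intro subsetI) (simp only: greaterThanAtMost_iff atLeastAtMost_iff, linarith)
    qed
    then show "indicator (\<Union>k\<in>{1..K}. I k) \<epsilon> \<le> (indicator {0..\<gamma>/2} \<epsilon> :: ennreal)" for \<epsilon>
      by (intro indicator_leI) blast
  qed auto
  finally show ?thesis .
qed

lemma ln_of_nat_nonneg: "0 \<le> ln (real n)"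
  by (cases n) auto

lemma dyadic_entropy_sum_le_integral:
  assumes F: "totally_bounded_sup F" and \<gamma>: "0 < \<gamma>"
  shows "ennreal (\<Sum>k=1..K. \<gamma> / 2 ^ (k + 1) * sqrt (ln (real (covering_number F (\<gamma> / 2 ^ k)))))
           \<le> (\<integral>\<^sup>+ \<epsilon>\<in>{0..\<gamma>/2}. ennreal (sqrt (ln (real (covering_number F \<epsilon>)))) \<partial>lborel)"
proof (rule sum_dyadic_le_nn_integral[OF \<gamma>])
  show "0 \<le> sqrt (ln (real (covering_number F (\<gamma> / 2 ^ k))))" for k
    using ln_of_nat_nonneg by simp
  fix k \<epsilon> assume "\<epsilon> \<in> {\<gamma> / 2 ^ (k + 1)<..\<gamma> / 2 ^ k}"
  moreover have "0 < \<gamma> / 2 ^ (k + 1)" using \<gamma> by simp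
  ultimately have "covering_number F (\<gamma> / 2 ^ k) \<le> covering_number F \<epsilon>"
    using F by (intro covering_number_antimono) auto
  then have "ln (real (covering_number F (\<gamma> / 2 ^ k))) \<le> ln (real (covering_number F \<epsilon>))"
    using ln_of_nat_nonneg[of "covering_number F \<epsilon>"] by (cases "covering_number F (\<gamma> / 2 ^ k) = 0") auto
  then show "sqrt (ln (real (covering_number F (\<gamma> / 2 ^ k)))) \<le> sqrt (ln (real (covering_number F \<epsilon>)))"
    by simp
qed

lemma le_two_power_nat_ceiling_log:
  assumes "0 < r"
  shows "r \<le> 2 ^ nat \<lceil>log 2 r\<rceil>"
proof -
  have "r = 2 powr log 2 r" using assms by simp
  also have "\<dots> \<le> 2 powr real (nat \<lceil>log 2 r\<rceil>)" by (intro powr_mono) linarith+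
  finally show ?thesis by (simp add: powr_realpow)
qed

section \<open>The chaining forecaster\<close>

definition chain_expert ::
  "nat \<Rightarrow> (nat \<Rightarrow> nat) \<Rightarrow> (nat \<Rightarrow> real) \<Rightarrow> (nat \<Rightarrow> nat \<Rightarrow> 'a \<Rightarrow> real) \<Rightarrow> (nat \<Rightarrow> 'a \<Rightarrow> real)
   \<Rightarrow> (nat \<Rightarrow> 'a) \<Rightarrow> (nat \<Rightarrow> real) \<Rightarrow> nat \<Rightarrow> nat \<Rightarrow> real" where
  "chain_expert K N \<eta> g f0 x y t j = chain_fhat K N \<eta> g f0 (chain_cum K N \<eta> g f0 x y (t - 1)) j (x t)"

lemma chain_loss_eq:
  "chain_loss K N \<eta> g f0 x y m j = (\<Sum>s=1..m. (y s - chain_expert K N \<eta> g f0 x y s j)\<^sup>2)"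
  by (induction m) (simp_all add: chain_expert_def)

lemma chain_cum_eq:
  "chain_cum K N \<eta> g f0 x y m j k i
     = (\<Sum>s=1..m. - 2 * (y s - chain_expert K N \<eta> g f0 x y s j) * g k i (x s))"
  by (induction m) (simp_all add: chain_expert_def)

lemma chain_pred_eq:
  "chain_pred \<eta>0 K N0 N \<eta> g f0 x y t
     = (\<Sum>j<N0. ewa_weight \<eta>0 (chain_loss K N \<eta> g f0 x y (t - 1)) N0 j * chain_expert K N \<eta> g f0 x y t j)"
  by (simp add: chain_pred_def chain_expert_def)

lemma chain_expert_dev:
  assumes "\<And>k. k \<in> {1..K} \<Longrightarrow> 0 < N k"
    and "\<And>k i. k \<in> {1..K} \<Longrightarrow> i < N k \<Longrightarrow> \<bar>g k i (x t)\<bar> \<le> c k"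
  shows "\<bar>chain_expert K N \<eta> g f0 x y t j - f0 j (x t)\<bar> \<le> (\<Sum>k=1..K. c k)"
proof -
  have "\<bar>chain_expert K N \<eta> g f0 x y t j - f0 j (x t)\<bar>
      = \<bar>\<Sum>k=1..K. \<Sum>i<N k. ewa_weight (\<eta> k) (chain_cum K N \<eta> g f0 x y (t - 1) j k) (N k) i * g k i (x t)\<bar>"
    by (simp add: chain_expert_def chain_fhat_def)
  also have "\<dots> \<le> (\<Sum>k=1..K. c k)"
    using assms by (intro order.trans[OF sum_abs] sum_mono abs_convex_combination_le)
      (simp_all add: ewa_weight_nonneg sum_ewa_weight)
  finally show ?thesis .
qed

lemma chain_pred_regret:
  assumes N0: "0 < N0" and \<eta>0: "0 < \<eta>0" and D: "2 * \<eta>0 * D\<^sup>2 \<le> 1"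
    and dev: "\<And>t j. t \<in> {1..T} \<Longrightarrow> j < N0 \<Longrightarrow> \<bar>y t - chain_expert K N \<eta> g f0 x y t j\<bar> \<le> D"
    and j: "j < N0"
  shows "(\<Sum>t=1..T. (y t - chain_pred \<eta>0 K N0 N \<eta> g f0 x y t)\<^sup>2)
           \<le> (\<Sum>t=1..T. (y t - chain_expert K N \<eta> g f0 x y t j)\<^sup>2) + ln N0 / \<eta>0"
  unfolding chain_pred_eq
  using ewa_square_loss_regret[where Lc = "chain_loss K N \<eta> g f0 x y" and p = "chain_expert K N \<eta> g f0 x y",
      OF N0 \<eta>0 D dev chain_loss_eq j]
  by (simp add: chain_loss_eq)

text \<open>The scale-\<open>k\<close> averages see the linearised losses \<open>-2 (y t - p t) g k i (x t)\<close>, the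
  gradients of the square loss at the expert's prediction \<open>p t\<close>; by convexity the expert's
  excess loss over the fixed chain \<open>f0 j + (\<Sum>k. g k (ik k))\<close> is at most the sum of their
  linear regrets.\<close>
lemma chain_expert_regret:
  fixes c :: "nat \<Rightarrow> real"
  assumes T: "0 < T" and D: "0 < D" and c: "\<And>k. k \<in> {1..K} \<Longrightarrow> 0 < c k"
    and N: "\<And>k. k \<in> {1..K} \<Longrightarrow> 0 < N k"
    and g: "\<And>k i z. k \<in> {1..K} \<Longrightarrow> i < N k \<Longrightarrow> \<bar>g k i z\<bar> \<le> c k"
    and \<eta>: "\<And>k. k \<in> {1..K} \<Longrightarrow> \<eta> k = sqrt (2 * ln (N k) / T) / (2 * D * c k)"
    and dev: "\<And>t. t \<in> {1..T} \<Longrightarrow> \<bar>y t - chain_expert K N \<eta> g f0 x y t j\<bar> \<le> D"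
    and ik: "\<And>k. k \<in> {1..K} \<Longrightarrow> ik k < N k"
  shows "(\<Sum>t=1..T. (y t - chain_expert K N \<eta> g f0 x y t j)\<^sup>2)
           \<le> (\<Sum>t=1..T. (y t - (f0 j (x t) + (\<Sum>k=1..K. g k (ik k) (x t))))\<^sup>2)
              + (\<Sum>k=1..K. 2 * D * c k * sqrt (2 * real T * ln (N k)))"
proof -
  define p where "p t = chain_expert K N \<eta> g f0 x y t j" for t
  define q where "q t = f0 j (x t) + (\<Sum>k=1..K. g k (ik k) (x t))" for t
  define u where "u t k i = ewa_weight (\<eta> k) (chain_cum K N \<eta> g f0 x y (t - 1) j k) (N k) i" for t k i
  define l where "l t k i = - 2 * (y t - p t) * g k i (x t)" for t k i
  define R where "R t k = (\<Sum>i<N k. u t k i * l t k i) - l t k (ik k)" for t k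
  have round: "(y t - p t)\<^sup>2 \<le> (y t - q t)\<^sup>2 + (\<Sum>k=1..K. R t k)" for t
  proof -
    have "p t - q t = (\<Sum>k=1..K. (\<Sum>i<N k. u t k i * g k i (x t)) - g k (ik k) (x t))"
      by (simp add: p_def q_def u_def chain_expert_def chain_fhat_def sum_subtractf)
    then have "- 2 * (y t - p t) * (p t - q t) = (\<Sum>k=1..K. R t k)"
      by (simp add: R_def l_def sum_distrib_left right_diff_distrib ac_simps)
    moreover have "(y t - p t)\<^sup>2 = (y t - q t)\<^sup>2 + - 2 * (y t - p t) * (p t - q t) - (p t - q t)\<^sup>2"
      by (simp add: power2_eq_square algebra_simps)
    ultimately show ?thesis using zero_le_power2[of "p t - q t"] by linarith
  qed
  have level: "(\<Sum>t=1..T. R t k) \<le> 2 * D * c k * sqrt (2 * real T * ln (N k))" if k: "k \<in> {1..K}" for k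
  proof -
    have "\<bar>l t k i\<bar> \<le> 2 * D * c k" if "t \<in> {1..T}" "i < N k" for t i
      using dev[of t] g[OF k that(2), of "x t"] that D c[OF k]
      by (simp add: l_def p_def abs_mult mult_mono)
    moreover have C: "chain_cum K N \<eta> g f0 x y m j k i = (\<Sum>s=1..m. l s k i)" for m i
      by (simp add: chain_cum_eq l_def p_def)
    moreover have "0 < 2 * D * c k" using D c[OF k] by simp
    ultimately have "(\<Sum>t=1..T. \<Sum>i<N k. u t k i * l t k i) - chain_cum K N \<eta> g f0 x y T j k (ik k)
        \<le> 2 * D * c k * sqrt (2 * real T * ln (N k))"
      unfolding u_def using ik[OF k] by (intro ewa_linear_regret_tuned[OF N[OF k] _ T \<eta>[OF k]]) auto
    then show ?thesis by (simp add: R_def sum_subtractf C)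
  qed
  have "(\<Sum>t=1..T. (y t - p t)\<^sup>2) \<le> (\<Sum>t=1..T. (y t - q t)\<^sup>2 + (\<Sum>k=1..K. R t k))"
    by (intro sum_mono round)
  also have "\<dots> = (\<Sum>t=1..T. (y t - q t)\<^sup>2) + (\<Sum>k=1..K. \<Sum>t=1..T. R t k)"
    by (simp only: sum.distrib sum.swap[of _ "{1..T}" "{1..K}"])
  also have "\<dots> \<le> (\<Sum>t=1..T. (y t - q t)\<^sup>2) + (\<Sum>k=1..K. 2 * D * c k * sqrt (2 * real T * ln (N k)))"
    by (intro add_left_mono sum_mono level)
  finally show ?thesis by (simp add: p_def q_def)
qed

lemma sum_square_loss_le_of_close:
  fixes y f h :: "nat \<Rightarrow> real"
  assumes close: "\<And>t. t \<in> {1..T} \<Longrightarrow> \<bar>f t - h t\<bar> \<le> \<delta>"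
    and bdd: "\<And>t. t \<in> {1..T} \<Longrightarrow> \<bar>y t\<bar> \<le> B \<and> \<bar>f t\<bar> \<le> B \<and> \<bar>h t\<bar> \<le> B"
  shows "(\<Sum>t=1..T. (y t - h t)\<^sup>2) \<le> (\<Sum>t=1..T. (y t - f t)\<^sup>2) + T * (4 * B * \<delta>)"
proof -
  have "(y t - h t)\<^sup>2 \<le> (y t - f t)\<^sup>2 + 4 * B * \<delta>" if t: "t \<in> {1..T}" for t
  proof -
    have "(y t - h t)\<^sup>2 - (y t - f t)\<^sup>2 = (f t - h t) * (2 * y t - f t - h t)"
      by (simp add: power2_eq_square algebra_simps)
    also have "\<dots> \<le> \<bar>f t - h t\<bar> * \<bar>2 * y t - f t - h t\<bar>"
      by (metis abs_ge_self abs_mult)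
    also have "\<dots> \<le> \<delta> * (4 * B)"
      using close[OF t] bdd[OF t] by (intro mult_mono) auto
    finally show ?thesis by (simp add: algebra_simps)
  qed
  then have "(\<Sum>t=1..T. (y t - h t)\<^sup>2) \<le> (\<Sum>t=1..T. (y t - f t)\<^sup>2 + 4 * B * \<delta>)"
    by (intro sum_mono)
  then show ?thesis by (simp add: sum.distrib)
qed

lemma ennreal_diff_INF_le:
  fixes L :: "'a \<Rightarrow> real"
  assumes "F \<noteq> {}" and "\<And>f. f \<in> F \<Longrightarrow> a \<le> L f + c"
  shows "ennreal (a - (INF f\<in>F. L f)) \<le> ennreal c"
proof -
  have "a - c \<le> (INF f\<in>F. L f)"
    using assms by (intro cINF_greatest) (auto simp: algebra_simps)
  then show ?thesis by (intro ennreal_leI) linarith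
qed

locale chaining_nets =
  fixes F :: "('x \<Rightarrow> real) set" and B \<gamma> :: real
    and net :: "nat \<Rightarrow> ('x \<Rightarrow> real) set" and proj :: "nat \<Rightarrow> ('x \<Rightarrow> real) \<Rightarrow> ('x \<Rightarrow> real)"
  assumes gamma_pos: "0 < \<gamma>"
    and F_ne: "F \<noteq> {}"
    and F_bdd: "\<forall>f\<in>F. \<forall>z. \<bar>f z\<bar> \<le> B"
    and F_tb: "totally_bounded_sup F"
    and nets: "\<forall>k. proper_net F (\<gamma> / 2 ^ k) (net k) \<and> finite (net k)
                 \<and> card (net k) = covering_number F (\<gamma> / 2 ^ k)"
    and proj: "\<forall>k. \<forall>f\<in>F. proj k f \<in> net k
                 \<and> (\<forall>h\<in>net k. sup_norm (\<lambda>z. f z - proj k f z) \<le> sup_norm (\<lambda>z. f z - h z))"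
begin

definition increments :: "nat \<Rightarrow> ('x \<Rightarrow> real) set" where
  "increments k = (\<lambda>f z. proj k f z - proj (k - 1) f z) ` F"

lemma net_subset: "net k \<subseteq> F"
  using nets unfolding proper_net_def by blast

lemma proj_in_net: "f \<in> F \<Longrightarrow> proj k f \<in> net k"
  using proj by blast

lemma proj_dist: "f \<in> F \<Longrightarrow> \<bar>f z - proj k f z\<bar> \<le> \<gamma> / 2 ^ k"
  using nets proj F_bdd by (intro nearest_net_point_dist[of F _ "net k"]) auto

lemma card_net_pos: "0 < card (net k)"
  using F_ne nets proj_in_net card_gt_0_iff by blast

lemma increment_bound:
  assumes "1 \<le> k" "h \<in> increments k"
  shows "\<bar>h z\<bar> \<le> 3 * \<gamma> / 2 ^ k"
proof -
  obtain f where f: "f \<in> F" "h = (\<lambda>z. proj k f z - proj (k - 1) f z)"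
    using assms(2) unfolding increments_def by blast
  have "\<bar>h z\<bar> \<le> \<bar>f z - proj k f z\<bar> + \<bar>f z - proj (k - 1) f z\<bar>" using f(2) by simp
  also have "\<dots> \<le> \<gamma> / 2 ^ k + \<gamma> / 2 ^ (k - 1)" using proj_dist[OF f(1)] by (intro add_mono)
  also have "\<gamma> / 2 ^ (k - 1) = 2 * \<gamma> / 2 ^ k" using assms(1) by (cases k) auto
  finally show ?thesis by simp
qed

lemma enumerated_increment_bound:
  assumes "\<forall>k\<ge>1. bij_betw (g k) {..<N k} (increments k)" "k \<in> {1..K}" "i < N k"
  shows "\<bar>g k i z\<bar> \<le> 3 * \<gamma> / 2 ^ k"
  using assms by (intro increment_bound) (auto dest: bij_betw_apply)

lemma finite_increments: "finite (increments k)"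
  and card_increments_le: "card (increments k) \<le> card (net k) * card (net (k - 1))"
  using finite_card_image_pairs_le[of "net k" "net (k - 1)" F "proj k" "proj (k - 1)"
      "\<lambda>u v z. u z - v z"] nets proj_in_net
  by (simp_all add: increments_def)

lemma card_increments_pos: "0 < card (increments k)"
  using F_ne finite_increments by (auto simp: increments_def card_gt_0_iff)

lemma sqrt_ln_card_increments_le:
  "sqrt (2 * real T * ln (card (increments k)))
     \<le> 2 * sqrt (real T) * sqrt (ln (covering_number F (\<gamma> / 2 ^ k)))"
proof -
  have "covering_number F (\<gamma> / 2 ^ (k - 1)) \<le> covering_number F (\<gamma> / 2 ^ k)"
    using F_tb gamma_pos by (intro covering_number_antimono divide_left_mono power_increasing) auto
  then have "card (increments k) \<le> card (net k) ^ 2"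
    using card_increments_le[of k] nets by (simp add: power2_eq_square)
      (meson le_trans mult_le_mono2)
  then have "ln (card (increments k)) \<le> ln (card (net k) ^ 2)"
    using card_increments_pos card_net_pos by (subst ln_le_cancel_iff) (auto simp flip: of_nat_power)
  also have "\<dots> = 2 * ln (covering_number F (\<gamma> / 2 ^ k))"
    using card_net_pos[of k] nets by (simp add: ln_realpow)
  finally have "2 * real T * ln (card (increments k)) \<le> 2 * real T * (2 * ln (covering_number F (\<gamma> / 2 ^ k)))"
    by (intro mult_left_mono) auto
  then have "sqrt (2 * real T * ln (card (increments k))) \<le> sqrt (4 * real T * ln (covering_number F (\<gamma> / 2 ^ k)))"
    by (simp add: mult.assoc)
  then show ?thesis by (simp add: real_sqrt_mult)
qed

lemma chain_indices_exist:
  assumes enum0: "bij_betw f0 {..<N0} (net 0)"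
    and enumk: "\<forall>k\<ge>1. bij_betw (g k) {..<N k} (increments k)" and f: "f \<in> F"
  obtains j0 ik where "j0 < N0" "\<And>k. k \<in> {1..K} \<Longrightarrow> ik k < N k"
    "\<And>z. f0 j0 z + (\<Sum>k=1..K. g k (ik k) z) = proj K f z"
proof -
  have "proj 0 f \<in> f0 ` {..<N0}" using enum0 proj_in_net[OF f] by (simp add: bij_betw_def)
  then obtain j0 where j0: "j0 < N0" "f0 j0 = proj 0 f" by auto
  have "\<exists>i. 1 \<le> k \<longrightarrow> i < N k \<and> g k i = (\<lambda>z. proj k f z - proj (k - 1) f z)" for k
  proof (cases "1 \<le> k")
    case True
    have "(\<lambda>z. proj k f z - proj (k - 1) f z) \<in> g k ` {..<N k}"
      using enumk True f by (simp add: bij_betw_def increments_def)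
    then show ?thesis by auto
  qed simp
  then obtain ik where ik: "\<And>k. 1 \<le> k \<Longrightarrow> ik k < N k \<and> g k (ik k) = (\<lambda>z. proj k f z - proj (k - 1) f z)"
    by metis
  have "f0 j0 z + (\<Sum>k=1..K. g k (ik k) z) = proj K f z" for z
    using j0 ik sum_telescope''[of 0 K "\<lambda>k. proj k f z"] by simp
  with j0(1) ik show ?thesis by (intro that) auto
qed

lemma chain_expert_close:
  assumes gamma_up: "\<gamma> < B" and y: "\<bar>y t\<bar> \<le> B"
    and N: "\<And>k. N k = card (increments k)"
    and enum0: "bij_betw f0 {..<N0} (net 0)"
    and enumk: "\<forall>k\<ge>1. bij_betw (g k) {..<N k} (increments k)" and j: "j < N0"
  shows "\<bar>y t - chain_expert K N \<eta> g f0 x y t j\<bar> \<le> 5 * B"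
proof -
  have "\<bar>chain_expert K N \<eta> g f0 x y t j - f0 j (x t)\<bar> \<le> (\<Sum>k=1..K. 3 * \<gamma> / 2 ^ k)"
    using card_increments_pos enumerated_increment_bound[OF enumk] by (intro chain_expert_dev) (auto simp: N)
  also have "\<dots> = 3 * \<gamma> * (1 - (1 / 2) ^ K)"
    by (induction K) (auto simp: field_simps)
  also have "\<dots> \<le> 3 * \<gamma>" using gamma_pos by simp
  also have "\<dots> \<le> 3 * B" using gamma_up by simp
  finally have "\<bar>chain_expert K N \<eta> g f0 x y t j - f0 j (x t)\<bar> \<le> 3 * B" .
  moreover have "\<bar>f0 j (x t)\<bar> \<le> B"
    using bij_betw_apply[OF enum0] j net_subset F_bdd by blast
  ultimately show ?thesis using y by linarith
qed

lemma chaining_forecaster_regret: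
  fixes T K N0 :: nat and x :: "nat \<Rightarrow> 'x" and y :: "nat \<Rightarrow> real" and N :: "nat \<Rightarrow> nat"
    and f0 :: "nat \<Rightarrow> 'x \<Rightarrow> real" and g :: "nat \<Rightarrow> nat \<Rightarrow> 'x \<Rightarrow> real" and \<eta> :: "nat \<Rightarrow> real"
  assumes T: "1 \<le> T" and gamma_up: "\<gamma> < B" and y_bdd: "\<forall>t\<in>{1..T}. \<bar>y t\<bar> \<le> B"
    and K: "\<gamma> / 2 ^ K \<le> B / T"
    and N: "\<And>k. N k = card (increments k)"
    and enum0: "bij_betw f0 {..<N0} (net 0)"
    and enumk: "\<forall>k\<ge>1. bij_betw (g k) {..<N k} (increments k)"
    and \<eta>: "\<And>k. \<eta> k = sqrt (2 * ln (real (N k)) / real T) * 2 ^ k / (30 * B * \<gamma>)"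
    and f: "f \<in> F"
  shows "(\<Sum>t=1..T. (y t - chain_pred (1 / (50 * B\<^sup>2)) K N0 N \<eta> g f0 x y t)\<^sup>2)
         \<le> (\<Sum>t=1..T. (y t - f (x t))\<^sup>2) + B\<^sup>2 * (5 + 50 * ln (real (covering_number F \<gamma>)))
           + 120 * B * sqrt (real T)
             * (\<Sum>k=1..K. \<gamma> / 2 ^ (k + 1) * sqrt (ln (real (covering_number F (\<gamma> / 2 ^ k)))))"
proof -
  let ?p = "chain_expert K N \<eta> g f0 x y"
  have B: "0 < B" using gamma_pos gamma_up by simp
  have N0: "N0 = covering_number F \<gamma>" and N0_pos: "0 < N0"
    using bij_betw_same_card[OF enum0] nets card_net_pos[of 0] by simp_all
  have dev: "\<bar>y t - ?p t j\<bar> \<le> 5 * B" if "t \<in> {1..T}" "j < N0" for t j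
    using that y_bdd by (intro chain_expert_close[OF gamma_up _ N enum0 enumk]) auto
  obtain j0 ik where j0: "j0 < N0" and ik: "\<And>k. k \<in> {1..K} \<Longrightarrow> ik k < N k"
    and chain: "\<And>z. f0 j0 z + (\<Sum>k=1..K. g k (ik k) z) = proj K f z"
    using chain_indices_exist[OF enum0 enumk f] by blast
  define S where "S = (\<Sum>k=1..K. 2 * (5 * B) * (3 * \<gamma> / 2 ^ k) * sqrt (2 * real T * ln (N k)))"
  have "(\<Sum>t=1..T. (y t - chain_pred (1 / (50 * B\<^sup>2)) K N0 N \<eta> g f0 x y t)\<^sup>2)
      \<le> (\<Sum>t=1..T. (y t - ?p t j0)\<^sup>2) + ln N0 / (1 / (50 * B\<^sup>2))"
    using B by (intro chain_pred_regret[OF N0_pos _ _ dev j0]) (simp_all add: power2_eq_square)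
  moreover have "(\<Sum>t=1..T. (y t - ?p t j0)\<^sup>2) \<le> (\<Sum>t=1..T. (y t - proj K f (x t))\<^sup>2) + S"
    unfolding S_def chain[symmetric]
    using T B gamma_pos card_increments_pos enumerated_increment_bound[OF enumk] dev j0 ik
    by (intro chain_expert_regret) (auto simp: N \<eta> field_simps)
  moreover have "(\<Sum>t=1..T. (y t - proj K f (x t))\<^sup>2) \<le> (\<Sum>t=1..T. (y t - f (x t))\<^sup>2) + T * (4 * B * (B / T))"
  proof (rule sum_square_loss_le_of_close)
    have "proj K f \<in> F" using net_subset proj_in_net[OF f] by blast
    then show "\<bar>y t\<bar> \<le> B \<and> \<bar>f (x t)\<bar> \<le> B \<and> \<bar>proj K f (x t)\<bar> \<le> B" if "t \<in> {1..T}" for t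
      using y_bdd F_bdd f that by blast
    show "\<bar>f (x t) - proj K f (x t)\<bar> \<le> B / T" for t
      using proj_dist[OF f] K by (rule order_trans)
  qed
  moreover have "S \<le> 120 * B * sqrt (real T)
      * (\<Sum>k=1..K. \<gamma> / 2 ^ (k + 1) * sqrt (ln (real (covering_number F (\<gamma> / 2 ^ k)))))"
    unfolding S_def sum_distrib_left N
    using sqrt_ln_card_increments_le B gamma_pos
    by (intro sum_mono) (auto simp: field_simps intro: order_trans[OF mult_left_mono])
  moreover have "T * (4 * B * (B / T)) \<le> 5 * B\<^sup>2" using T by (simp add: power2_eq_square)
  ultimately show ?thesis by (simp add: N0 algebra_simps)
qed

end

theorem theorem2:
  fixes F :: "('x \<Rightarrow> real) set" and B \<gamma> :: real and T :: nat
    and x :: "nat \<Rightarrow> 'x" and y :: "nat \<Rightarrow> real"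
    and net :: "nat \<Rightarrow> ('x \<Rightarrow> real) set"
    and proj :: "nat \<Rightarrow> ('x \<Rightarrow> real) \<Rightarrow> ('x \<Rightarrow> real)"
    and f0 :: "nat \<Rightarrow> 'x \<Rightarrow> real" and g :: "nat \<Rightarrow> nat \<Rightarrow> 'x \<Rightarrow> real"
  defines "Gk \<equiv> (\<lambda>k. (\<lambda>f z. proj k f z - proj (k - 1) f z) ` F)"
  defines "K \<equiv> nat \<lceil>log 2 (\<gamma> * real T / B)\<rceil>"
  defines "N0 \<equiv> card (net 0)"
  defines "N \<equiv> (\<lambda>k. card (Gk k))"
  defines "\<eta>0 \<equiv> 1 / (50 * B\<^sup>2)"
  defines "\<eta> \<equiv> (\<lambda>k. sqrt (2 * ln (real (N k)) / real T) * 2 ^ k / (30 * B * \<gamma>))"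
  assumes B_pos: "B > 0" and T_ge: "T \<ge> 1"
    and gamma_low: "B / real T < \<gamma>" and gamma_up: "\<gamma> < B"
    and F_ne: "F \<noteq> {}"
    and F_bdd: "\<forall>f\<in>F. \<forall>z. \<bar>f z\<bar> \<le> B"
    and F_tb: "totally_bounded_sup F"
    and y_bdd: "\<forall>t\<in>{1..T}. \<bar>y t\<bar> \<le> B"
    and nets: "\<forall>k. proper_net F (\<gamma> / 2 ^ k) (net k) \<and> finite (net k)
                 \<and> card (net k) = covering_number F (\<gamma> / 2 ^ k)"
    and proj: "\<forall>k. \<forall>f\<in>F. proj k f \<in> net k
                 \<and> (\<forall>h\<in>net k. sup_norm (\<lambda>z. f z - proj k f z) \<le> sup_norm (\<lambda>z. f z - h z))"
    and enum0: "bij_betw f0 {..<N0} (net 0)"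
    and enumk: "\<forall>k\<ge>1. bij_betw (g k) {..<N k} (Gk k)"
  shows "ennreal ((\<Sum>t=1..T. (y t - chain_pred \<eta>0 K N0 N \<eta> g f0 x y t)\<^sup>2)
                   - (INF f\<in>F. \<Sum>t=1..T. (y t - f (x t))\<^sup>2))
         \<le> ennreal (B\<^sup>2 * (5 + 50 * ln (real (covering_number F \<gamma>))))
           + ennreal (120 * B * sqrt (real T))
             * (\<integral>\<^sup>+ \<epsilon>\<in>{0..\<gamma>/2}. ennreal (sqrt (ln (real (covering_number F \<epsilon>)))) \<partial>lborel)"
proof -
  define A where "A = B\<^sup>2 * (5 + 50 * ln (real (covering_number F \<gamma>)))"
  define I where "I = (\<Sum>k=1..K. \<gamma> / 2 ^ (k + 1) * sqrt (ln (real (covering_number F (\<gamma> / 2 ^ k)))))"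
  have "0 < B / T" using B_pos T_ge by simp
  then have \<gamma>: "0 < \<gamma>" using gamma_low by linarith
  interpret chaining_nets F B \<gamma> net proj
    using \<gamma> F_ne F_bdd F_tb nets proj by unfold_locales
  have Gk: "Gk = increments" by (simp add: Gk_def increments_def fun_eq_iff)
  have K_fine: "\<gamma> / 2 ^ K \<le> B / T"
    using le_two_power_nat_ceiling_log[of "\<gamma> * T / B"] \<gamma> B_pos T_ge
    by (simp add: K_def field_simps)
  have N: "N k = card (increments k)" for k by (simp add: N_def Gk)
  have "ennreal ((\<Sum>t=1..T. (y t - chain_pred \<eta>0 K N0 N \<eta> g f0 x y t)\<^sup>2)
      - (INF f\<in>F. \<Sum>t=1..T. (y t - f (x t))\<^sup>2)) \<le> ennreal (A + 120 * B * sqrt T * I)"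
    using chaining_forecaster_regret[OF T_ge gamma_up y_bdd K_fine N enum0 enumk[unfolded Gk],
        where \<eta> = \<eta> and x = x]
    unfolding A_def I_def \<eta>0_def \<eta>_def by (intro ennreal_diff_INF_le[OF F_ne]) (simp add: add.assoc)
  also have "\<dots> = ennreal A + ennreal (120 * B * sqrt T) * ennreal I"
  proof -
    have "0 \<le> A" "0 \<le> I"
      unfolding A_def I_def using ln_of_nat_nonneg \<gamma> by (auto intro!: sum_nonneg)
    then show ?thesis using B_pos by (simp add: ennreal_plus ennreal_mult)
  qed
  also have "\<dots> \<le> ennreal A + ennreal (120 * B * sqrt T)
      * (\<integral>\<^sup>+ \<epsilon>\<in>{0..\<gamma>/2}. ennreal (sqrt (ln (real (covering_number F \<epsilon>)))) \<partial>lborel)"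
    unfolding I_def by (intro add_left_mono mult_left_mono dyadic_entropy_sum_le_integral F_tb \<gamma>) simp
  finally show ?thesis unfolding A_def .
qed

end
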